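(* Let $H$ be a subgroup of $B_\infty(D)$ such that $P_\infty(D)\subsetneq H\subset B_\infty(D)$. Then $H$ is not bi-orderable.
   Context: $B_n(D)$ is the Artin braid group on $n$ strands, with generators $\sigma_1,\dots,\sigma_{n-1}$ and relations $\sigma_i\sigma_j=\sigma_j\sigma_i$ for $|i-j|\ge 2$ and $\sigma_i\sigma_{i+1}\sigma_i=\sigma_{i+1}\sigma_i\sigma_{i+1}$; $P_n(D)$ is the kernel of the permutation homomorphism $B_n(D)\to S_n$, $\sigma_i\mapsto(i,i+1)$. The infinite braid group $B_\infty(D)$ is the direct limit of the groups $B_n(D)$ under the injective homomorphisms $\iota: B_n(D)\to B_{n+1}(D)$, $\iota(\sigma_i)=\sigma_i$; $P_\infty(D)$ is the direct limit of the $P_n(D)$ under the restrictions of $\iota$ (equivalently, the kernel of the induced permutation homomorphism from $B_\infty(D)$ to the group of finitely supported permutations of the positive integers). A group is bi-orderable if it admits a strict total ordering invariant under both left and right multiplication. *)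

theory Defs
  imports "HOL-Algebra.Group"
begin

text \<open>Braid words: a letter (i, True) stands for the Artin generator sigma_(i+1),
  and (i, False) for its inverse (0-based indexing of generators, so letter i acts
  on strands i and i+1, counted from 0).\<close>

type_synonym braid_word = "(nat \<times> bool) list"

inductive braid_eq :: "braid_word \<Rightarrow> braid_word \<Rightarrow> bool" where
  be_refl: "braid_eq u u"
| be_sym: "braid_eq u v \<Longrightarrow> braid_eq v u"
| be_trans: "braid_eq u v \<Longrightarrow> braid_eq v w \<Longrightarrow> braid_eq u w"
| be_cong: "braid_eq u v \<Longrightarrow> braid_eq (x @ u @ y) (x @ v @ y)"
| be_inv: "braid_eq [(i, b), (i, \<not> b)] []"
| be_comm: "i + 2 \<le> j \<Longrightarrow> braid_eq [(i, True), (j, True)] [(j, True), (i, True)]"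
| be_braid: "braid_eq [(i, True), (Suc i, True), (i, True)]
                      [(Suc i, True), (i, True), (Suc i, True)]"

definition braid_rel :: "braid_word rel" where
  "braid_rel = {(u, v). braid_eq u v}"

definition braid_group :: "braid_word set monoid" where
  "braid_group = \<lparr> carrier = UNIV // braid_rel,
      monoid.mult = (\<lambda>A B. braid_rel `` {u @ v | u v. u \<in> A \<and> v \<in> B}),
      one = braid_rel `` {[]} \<rparr>"

definition perm_gen :: "nat \<Rightarrow> nat \<Rightarrow> nat" where
  "perm_gen i = (\<lambda>k. if k = i then Suc i else if k = Suc i then i else k)"

fun perm_of :: "braid_word \<Rightarrow> nat \<Rightarrow> nat" where
  "perm_of [] = id"
| "perm_of (x # w) = perm_gen (fst x) \<circ> perm_of w"

definition pure_braids :: "braid_word set set" where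
  "pure_braids = {c \<in> carrier braid_group. \<forall>w \<in> c. perm_of w = id}"

definition bi_orderable :: "('a, 'b) monoid_scheme \<Rightarrow> bool" where
  "bi_orderable G \<longleftrightarrow> (\<exists>less :: 'a \<Rightarrow> 'a \<Rightarrow> bool.
      (\<forall>a \<in> carrier G. \<not> less a a) \<and>
      (\<forall>a \<in> carrier G. \<forall>b \<in> carrier G. \<forall>c \<in> carrier G. less a b \<longrightarrow> less b c \<longrightarrow> less a c) \<and>
      (\<forall>a \<in> carrier G. \<forall>b \<in> carrier G. a \<noteq> b \<longrightarrow> less a b \<or> less b a) \<and>
      (\<forall>a \<in> carrier G. \<forall>b \<in> carrier G. \<forall>c \<in> carrier G. less a b \<longrightarrow>
          less (c \<otimes>\<^bsub>G\<^esub> a) (c \<otimes>\<^bsub>G\<^esub> b) \<and> less (a \<otimes>\<^bsub>G\<^esub> c) (b \<otimes>\<^bsub>G\<^esub> c)))"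

end

theory Submission
  imports Defs "HOL-Combinatorics.Cycles" "HOL-Computational_Algebra.Primes"
begin

text \<open>Let \<open>H\<close> contain \<open>P\<^sub>\<infinity>\<close> and a braid whose permutation \<open>\<pi>\<close> is not the identity. Some power
  \<open>\<rho>\<close> of \<open>\<pi>\<close> has prime order \<open>p\<close>, and since \<open>P\<^sub>\<infinity> \<subseteq> H\<close>, every braid with permutation \<open>\<rho>\<close> lies
  in \<open>H\<close>. Relabelling the strands, \<open>\<rho>\<close> becomes the permutation of a braid \<open>D\<close> whose \<open>p\<close>-th
  power is a full twist, hence commutes with \<open>\<sigma>\<^sub>1\<close>: for \<open>r\<close> orbits of length \<open>p\<close> take
  \<open>D = (\<sigma>\<^sub>1 \<cdots> \<sigma>\<^sub>r\<^sub>p\<^sub>-\<^sub>1)\<^sup>r\<close>, and for a transposition \<open>D = \<sigma>\<^sub>1\<sigma>\<^sub>2\<sigma>\<^sub>1\<close>. Then a conjugate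
  \<open>X = g D g\<^sup>-\<^sup>1\<close> and \<open>X' = g \<sigma>\<^sub>1\<^sup>2 D \<sigma>\<^sub>1\<^sup>-\<^sup>2 g\<^sup>-\<^sup>1\<close> both lie in \<open>H\<close> and have the same \<open>p\<close>-th
  power, yet differ, because \<open>D\<close> does not keep the first two strands together and so the
  linking number of those strands distinguishes \<open>D\<close> from \<open>\<sigma>\<^sub>1\<^sup>2 D \<sigma>\<^sub>1\<^sup>-\<^sup>2\<close>. In a bi-ordered
  group \<open>x < y\<close> implies \<open>x\<^sup>p < y\<^sup>p\<close>, so roots are unique and \<open>H\<close> cannot be bi-ordered.\<close>

section \<open>Braid words and the braid group\<close>

declare be_trans [trans]

lemma braid_eq_append: "braid_eq u u' \<Longrightarrow> braid_eq v v' \<Longrightarrow> braid_eq (u @ v) (u' @ v')"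
  using be_cong[of u u' "[]" v] be_cong[of v v' u' "[]"] be_trans by simp

lemma braid_eq_in_context: "braid_eq u v \<Longrightarrow> x @ u @ y = A \<Longrightarrow> x @ v @ y = B \<Longrightarrow> braid_eq A B"
  using be_cong by blast

definition inverse_word :: "braid_word \<Rightarrow> braid_word" where
  "inverse_word w = rev (map (\<lambda>(i, b). (i, \<not> b)) w)"

lemma inverse_word_simps [simp]:
  "inverse_word [] = []"
  "inverse_word (x # w) = inverse_word w @ [(fst x, \<not> snd x)]"
  "inverse_word (u @ v) = inverse_word v @ inverse_word u"
  by (auto simp: inverse_word_def case_prod_beta)

lemma braid_eq_append_inverse_word: "braid_eq (w @ inverse_word w) []"
proof (induction w)
  case Nil
  show ?case by (simp add: be_refl)
next
  case (Cons x w)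
  obtain i b where x: "x = (i, b)" by (cases x)
  have "braid_eq ([x] @ (w @ inverse_word w) @ [(i, \<not> b)]) ([x] @ [] @ [(i, \<not> b)])"
    by (rule be_cong[OF Cons.IH])
  also have "braid_eq ([x] @ [] @ [(i, \<not> b)]) []"
    using be_inv[of i b] x by simp
  finally show ?case using x by simp
qed

lemma braid_eq_inverse_word_append: "braid_eq (inverse_word w @ w) []"
proof (induction w)
  case Nil
  show ?case by (simp add: be_refl)
next
  case (Cons x w)
  obtain i b where x: "x = (i, b)" by (cases x)
  have "braid_eq (inverse_word w @ [(i, \<not> b), (i, \<not> \<not> b)] @ w) (inverse_word w @ [] @ w)"
    by (rule be_cong[OF be_inv])
  then have "braid_eq (inverse_word (x # w) @ x # w) (inverse_word w @ w)"
    using x by simp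
  also note Cons.IH
  finally show ?case .
qed

definition word_pow :: "nat \<Rightarrow> braid_word \<Rightarrow> braid_word" where
  "word_pow k w = concat (replicate k w)"

lemma word_pow_simps [simp]:
  "word_pow 0 w = []"
  "word_pow (Suc k) w = w @ word_pow k w"
  by (simp_all add: word_pow_def)

lemma word_pow_append_self: "word_pow k w @ w = w @ word_pow k w"
  by (induction k) auto

lemma word_pow_add: "word_pow (a + b) w = word_pow a w @ word_pow b w"
  by (induction a) auto

lemma word_pow_mult: "word_pow p (word_pow r w) = word_pow (r * p) w"
  by (induction p) (auto simp: word_pow_add)

lemma word_pow_conjugate:
  "braid_eq (word_pow k (g @ w @ inverse_word g)) (g @ word_pow k w @ inverse_word g)"
proof (induction k)
  case 0
  show ?case using braid_eq_append_inverse_word[of g] be_sym by simp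
next
  case (Suc k)
  have "braid_eq (g @ w @ inverse_word g @ word_pow k (g @ w @ inverse_word g))
                 (g @ w @ inverse_word g @ g @ word_pow k w @ inverse_word g)"
    by (rule braid_eq_in_context[OF Suc.IH, of "g @ w @ inverse_word g" "[]"]) simp_all
  also have "braid_eq \<dots> (g @ w @ [] @ word_pow k w @ inverse_word g)"
    by (rule braid_eq_in_context[OF braid_eq_inverse_word_append, of "g @ w"]) simp_all
  finally show ?case by simp
qed

definition braid_class :: "braid_word \<Rightarrow> braid_word set" where
  "braid_class w = braid_rel `` {w}"

lemma mem_braid_class: "v \<in> braid_class u \<longleftrightarrow> braid_eq u v"
  by (simp add: braid_class_def braid_rel_def)

lemma braid_class_eq_iff: "braid_class u = braid_class v \<longleftrightarrow> braid_eq u v"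
  unfolding set_eq_iff mem_braid_class by (meson be_refl be_sym be_trans)

lemma braid_group_carrier: "c \<in> carrier braid_group \<longleftrightarrow> (\<exists>w. c = braid_class w)"
  by (auto simp: braid_group_def quotient_def braid_class_def)

lemma braid_group_one: "\<one>\<^bsub>braid_group\<^esub> = braid_class []"
  by (simp add: braid_group_def braid_class_def)

lemma braid_group_mult:
  "braid_class u \<otimes>\<^bsub>braid_group\<^esub> braid_class v = braid_class (u @ v)"
proof -
  have "braid_rel `` {u' @ v' | u' v'. u' \<in> braid_class u \<and> v' \<in> braid_class v} = braid_class (u @ v)"
    by (auto simp: braid_rel_def mem_braid_class intro: be_refl)
      (meson braid_eq_append be_trans, blast intro: be_refl)
  then show ?thesis by (simp add: braid_group_def braid_class_def)
qed

lemma group_braid_group: "group braid_group"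
proof (rule groupI)
  fix x y z
  assume "x \<in> carrier braid_group" "y \<in> carrier braid_group" "z \<in> carrier braid_group"
  then show "x \<otimes>\<^bsub>braid_group\<^esub> y \<otimes>\<^bsub>braid_group\<^esub> z =
             x \<otimes>\<^bsub>braid_group\<^esub> (y \<otimes>\<^bsub>braid_group\<^esub> z)"
    by (auto simp: braid_group_carrier braid_group_mult)
next
  fix x
  assume "x \<in> carrier braid_group"
  then obtain w where w: "x = braid_class w" by (auto simp: braid_group_carrier)
  have "braid_class (inverse_word w) \<otimes>\<^bsub>braid_group\<^esub> x = \<one>\<^bsub>braid_group\<^esub>"
    using braid_eq_inverse_word_append
    by (simp add: w braid_group_mult braid_group_one braid_class_eq_iff)
  then show "\<exists>y \<in> carrier braid_group. y \<otimes>\<^bsub>braid_group\<^esub> x = \<one>\<^bsub>braid_group\<^esub>"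
    by (metis braid_group_carrier)
qed (auto simp: braid_group_carrier braid_group_mult braid_group_one)

lemma braid_group_pow: "braid_class w [^]\<^bsub>braid_group\<^esub> (n::nat) = braid_class (word_pow n w)"
  by (induction n) (simp_all add: braid_group_one braid_group_mult word_pow_append_self)

lemma perm_gen_transpose: "perm_gen i = transpose i (Suc i)"
  by (auto simp: perm_gen_def transpose_def fun_eq_iff)

lemma perm_gen_perm_gen [simp]: "perm_gen i (perm_gen i a) = a"
  by (auto simp: perm_gen_def)

lemma perm_of_append [simp]: "perm_of (u @ v) = perm_of u \<circ> perm_of v"
  by (induction u) auto

lemma perm_of_braid_eq: "braid_eq u v \<Longrightarrow> perm_of u = perm_of v"
  by (induction rule: braid_eq.induct) (auto simp: fun_eq_iff perm_gen_def)

lemma permutation_perm_of: "permutation (perm_of w)"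
proof (induction w)
  case (Cons x w)
  show ?case
    unfolding perm_of.simps perm_gen_transpose
    by (rule permutation_compose[OF permutation_swap_id Cons.IH])
qed simp

lemma perm_of_inverse_word:
  "perm_of (inverse_word w) (perm_of w a) = a" "perm_of w (perm_of (inverse_word w) a) = a"
  using perm_of_braid_eq[OF braid_eq_inverse_word_append[of w]]
    perm_of_braid_eq[OF braid_eq_append_inverse_word[of w]]
  by (simp_all add: fun_eq_iff)

lemma perm_of_word_pow: "perm_of (word_pow k w) = perm_of w ^^ k"
  by (induction k) simp_all

lemma braid_class_in_pure_braids_iff: "braid_class w \<in> pure_braids \<longleftrightarrow> perm_of w = id"
proof
  assume "braid_class w \<in> pure_braids"
  then show "perm_of w = id"
    using be_refl[of w] by (simp add: pure_braids_def mem_braid_class)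
next
  assume w: "perm_of w = id"
  have "perm_of v = id" if "v \<in> braid_class w" for v
    using that w perm_of_braid_eq[of w v] by (simp add: mem_braid_class)
  moreover have "braid_class w \<in> carrier braid_group"
    by (auto simp: braid_group_carrier)
  ultimately show "braid_class w \<in> pure_braids"
    by (simp add: pure_braids_def)
qed

lemma same_perm_in_subgroup:
  assumes "subgroup H braid_group" "pure_braids \<subseteq> H"
    and "braid_class w \<in> H" "perm_of v = perm_of w"
  shows "braid_class v \<in> H"
proof -
  have "perm_of (inverse_word w @ v) = id"
    using assms(4) perm_of_inverse_word(1)[of w] by (simp add: fun_eq_iff)
  then have pure: "braid_class (inverse_word w @ v) \<in> H"
    using assms(2) braid_class_in_pure_braids_iff by blast
  have "braid_class (w @ inverse_word w @ v) \<in> H"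
    using subgroup.m_closed[OF assms(1) assms(3) pure] by (simp add: braid_group_mult)
  moreover have "braid_eq ((w @ inverse_word w) @ v) ([] @ v)"
    by (rule braid_eq_append[OF braid_eq_append_inverse_word be_refl])
  ultimately show ?thesis
    by (metis append.assoc append_self_conv2 braid_class_eq_iff)
qed

section \<open>Linking numbers\<close>

text \<open>\<open>strand_pos w a\<close> is the final position of the strand that starts at position
  \<open>a\<close>, and \<open>linking a b w\<close> counts the crossings of \<open>w\<close> between the strands starting
  at \<open>a\<close> and \<open>b\<close>, with signs.\<close>

fun strand_pos :: "braid_word \<Rightarrow> nat \<Rightarrow> nat" where
  "strand_pos [] = id"
| "strand_pos (x # w) = strand_pos w \<circ> perm_gen (fst x)"

fun linking :: "nat \<Rightarrow> nat \<Rightarrow> braid_word \<Rightarrow> int" where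
  "linking a b [] = 0"
| "linking a b (x # w) =
     (if {a, b} = {fst x, Suc (fst x)} then (if snd x then 1 else -1) else 0)
     + linking (perm_gen (fst x) a) (perm_gen (fst x) b) w"

lemma linking_append:
  "linking a b (u @ v) = linking a b u + linking (strand_pos u a) (strand_pos u b) v"
  by (induction u arbitrary: a b) auto

lemma strand_pos_perm_of: "strand_pos u (perm_of u a) = a" "perm_of u (strand_pos u a) = a"
  by (induction u arbitrary: a) auto

lemma strand_pos_braid_eq: "braid_eq u v \<Longrightarrow> strand_pos u = strand_pos v"
  by (metis perm_of_braid_eq strand_pos_perm_of ext)

lemma linking_braid_eq: "braid_eq u v \<Longrightarrow> linking a b u = linking a b v"
proof (induction arbitrary: a b rule: braid_eq.induct)
  case (be_cong u v x y)
  then show ?case by (simp add: linking_append strand_pos_braid_eq)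
qed (auto simp: perm_gen_def doubleton_eq_iff)

text \<open>Conjugating by \<open>\<sigma>\<^sub>1\<^sup>2\<close> adds two crossings of the first two strands, which no
  longer meet inside the conjugating word at the other end of \<open>D\<close>.\<close>

lemma linking_sigma_square_conjugate:
  fixes D :: braid_word
  defines "u \<equiv> [(0, True), (0, True)]"
  assumes "{perm_of D 0, perm_of D 1} \<noteq> {0, 1}"
  shows "linking 0 1 (u @ D @ inverse_word u) = linking 0 1 D + 2"
proof -
  have "perm_of D ` {strand_pos D 0, strand_pos D 1} = {0, 1}"
    by (simp add: strand_pos_perm_of)
  then have "{strand_pos D 0, strand_pos D 1} \<noteq> {0, 1}"
    using assms(2) by (metis image_empty image_insert)
  then have "linking (strand_pos D 0) (strand_pos D 1) (inverse_word u) = 0"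
    by (auto simp: u_def perm_gen_def doubleton_eq_iff)
  moreover have "strand_pos u = id"
    by (simp add: u_def fun_eq_iff)
  moreover have "linking 0 1 u = 2"
    by (simp add: u_def perm_gen_def doubleton_eq_iff)
  ultimately show ?thesis
    by (simp add: linking_append)
qed

section \<open>Braids whose powers commute with \<open>\<sigma>\<^sub>1\<close>\<close>

definition braid_commute :: "braid_word \<Rightarrow> braid_word \<Rightarrow> bool" where
  "braid_commute u v \<longleftrightarrow> braid_eq (u @ v) (v @ u)"

lemma braid_commute_append:
  "braid_commute w u \<Longrightarrow> braid_commute w v \<Longrightarrow> braid_commute w (u @ v)"
proof -
  assume "braid_commute w u" "braid_commute w v"
  then have "braid_eq ((w @ u) @ v) ((u @ w) @ v)" "braid_eq (u @ (w @ v)) (u @ (v @ w))"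
    unfolding braid_commute_def by (simp_all only: braid_eq_append be_refl)
  then show ?thesis
    unfolding braid_commute_def using be_trans by simp
qed

lemma braid_commute_far_positive:
  assumes "\<forall>k \<in> set x. snd k \<and> (fst k + 2 \<le> j \<or> j + 2 \<le> fst k)"
  shows "braid_commute [(j, True)] x"
  using assms
proof (induction x)
  case Nil
  show ?case by (simp add: braid_commute_def be_refl)
next
  case (Cons y x)
  obtain k where y: "y = (k, True)" "k + 2 \<le> j \<or> j + 2 \<le> k"
    using Cons.prems by (cases y) auto
  have "braid_commute [(j, True)] [y]"
    using y be_comm be_sym by (auto simp: braid_commute_def)
  then show ?case
    using braid_commute_append[of _ "[y]" x] Cons by simp
qed

text \<open>Letters are numbered from 0, so \<open>ascending_word a b\<close> is \<open>\<sigma>\<^sub>a\<^sub>+\<^sub>1 \<cdots> \<sigma>\<^sub>b\<close>;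
  in particular \<open>ascending_word 0 (m - 1)\<close> is the braid \<open>\<sigma>\<^sub>1 \<cdots> \<sigma>\<^sub>m\<^sub>-\<^sub>1\<close>, which rotates the
  first \<open>m\<close> strands and whose \<open>m\<close>-th power is the full twist.\<close>

definition ascending_word :: "nat \<Rightarrow> nat \<Rightarrow> braid_word" where
  "ascending_word a b = map (\<lambda>k. (k, True)) [a..<b]"

lemma ascending_word_Suc: "a \<le> b \<Longrightarrow> ascending_word a (Suc b) = ascending_word a b @ [(b, True)]"
  by (simp add: ascending_word_def)

lemma ascending_word_split:
  assumes "a \<le> i" "Suc i < b"
  shows "ascending_word a b =
    ascending_word a i @ [(i, True), (Suc i, True)] @ ascending_word (Suc (Suc i)) b"
proof -
  have "[a..<b] = [a..<i] @ [i..<b]"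
    using upt_add_eq_append[of a i "b - i"] assms by simp
  moreover have "[i..<b] = i # Suc i # [Suc (Suc i)..<b]"
    using assms by (simp add: upt_conv_Cons)
  ultimately show ?thesis by (simp add: ascending_word_def)
qed

lemma ascending_word_shift:
  assumes "a \<le> i" "Suc i < b"
  shows "braid_eq (ascending_word a b @ [(i, True)]) ([(Suc i, True)] @ ascending_word a b)"
proof -
  let ?P = "ascending_word a i" and ?Q = "ascending_word (Suc (Suc i)) b"
  have "braid_commute [(i, True)] ?Q" "braid_commute [(Suc i, True)] ?P"
    by (auto intro!: braid_commute_far_positive simp: ascending_word_def)
  then have Q: "braid_eq (?Q @ [(i, True)]) ([(i, True)] @ ?Q)"
    and P: "braid_eq ([(Suc i, True)] @ ?P) (?P @ [(Suc i, True)])"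
    unfolding braid_commute_def by (simp_all add: be_sym)
  have "braid_eq (ascending_word a b @ [(i, True)])
                 (?P @ [(i, True), (Suc i, True), (i, True)] @ ?Q)"
    by (rule braid_eq_in_context[OF Q, of "?P @ [(i, True), (Suc i, True)]" "[]"])
      (simp_all add: ascending_word_split[OF assms])
  also have "braid_eq \<dots> (?P @ [(Suc i, True), (i, True), (Suc i, True)] @ ?Q)"
    by (rule be_cong[OF be_braid])
  also have "braid_eq \<dots> ([(Suc i, True)] @ ascending_word a b)"
    by (rule braid_eq_in_context[OF be_sym[OF P], of "[]" "[(i, True), (Suc i, True)] @ ?Q"])
      (simp_all add: ascending_word_split[OF assms])
  finally show ?thesis .
qed

lemma ascending_word_square_shift_last:
  "braid_eq (ascending_word a (a + Suc n) @ ascending_word a (a + Suc n) @ [(a + n, True)])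
            ([(a, True)] @ ascending_word a (a + Suc n) @ ascending_word a (a + Suc n))"
proof (induction n)
  case 0
  show ?case by (simp add: ascending_word_def be_refl)
next
  case (Suc n)
  define b c where "b = a + n" and "c = a + Suc n"
  let ?d = "ascending_word a b" and ?d' = "ascending_word a c"
  have d': "?d' = ?d @ [(b, True)]" and d: "ascending_word a (a + Suc (Suc n)) = ?d' @ [(c, True)]"
    by (simp_all add: b_def c_def ascending_word_Suc)
  have "braid_commute [(c, True)] ?d"
    by (rule braid_commute_far_positive) (auto simp: ascending_word_def b_def c_def)
  then have cd: "braid_eq ([(c, True)] @ ?d) (?d @ [(c, True)])"
    by (simp add: braid_commute_def)
  have br: "braid_eq [(c, True), (b, True), (c, True)] [(b, True), (c, True), (b, True)]"
    using be_sym[OF be_braid[of b]] by (simp add: b_def c_def)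
  have square: "braid_eq (?d' @ [(c, True)] @ ?d' @ [(c, True)]) (?d' @ ?d' @ [(c, True), (b, True)])"
  proof -
    have "braid_eq (?d' @ [(c, True)] @ ?d' @ [(c, True)]) (?d' @ ?d @ [(c, True), (b, True), (c, True)])"
      by (rule braid_eq_in_context[OF cd, of ?d' "[(b, True), (c, True)]"]) (simp_all add: d')
    also have "braid_eq \<dots> (?d' @ ?d' @ [(c, True), (b, True)])"
      by (rule braid_eq_in_context[OF br, of "?d' @ ?d" "[]"]) (simp_all add: d')
    finally show ?thesis .
  qed
  have "braid_eq (?d' @ [(c, True)] @ ?d' @ [(c, True)] @ [(c, True)])
                 (?d' @ ?d' @ [(c, True), (b, True), (c, True)])"
    by (rule braid_eq_in_context[OF square, of "[]" "[(c, True)]"]) simp_all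
  also have "braid_eq \<dots> ((?d' @ ?d' @ [(b, True)]) @ [(c, True), (b, True)])"
    by (rule braid_eq_in_context[OF br, of "?d' @ ?d'" "[]"]) simp_all
  also have "braid_eq \<dots> (([(a, True)] @ ?d' @ ?d') @ [(c, True), (b, True)])"
    using braid_eq_append[OF Suc.IH be_refl[of "[(c, True), (b, True)]"]] by (simp add: b_def c_def)
  also have "braid_eq \<dots> ([(a, True)] @ ?d' @ [(c, True)] @ ?d' @ [(c, True)])"
    by (rule braid_eq_in_context[OF be_sym[OF square], of "[(a, True)]" "[]"]) simp_all
  finally show ?case
    unfolding d by (simp add: c_def)
qed

lemma ascending_word_pow_shift_first:
  assumes "k + 2 \<le> m"
  shows "braid_eq (word_pow k (ascending_word 0 (m - 1)) @ [(0, True)])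
                  ([(k, True)] @ word_pow k (ascending_word 0 (m - 1)))"
  using assms
proof (induction k)
  case 0
  show ?case by (simp add: be_refl)
next
  case (Suc k)
  let ?d = "ascending_word 0 (m - 1)"
  have "braid_eq (?d @ word_pow k ?d @ [(0, True)]) (?d @ [(k, True)] @ word_pow k ?d)"
    by (rule braid_eq_in_context[OF Suc.IH, of ?d "[]"]) (use Suc.prems in simp_all)
  also have "braid_eq \<dots> ([(Suc k, True)] @ ?d @ word_pow k ?d)"
    by (rule braid_eq_in_context[OF ascending_word_shift[of 0 k "m - 1"], of "[]"])
      (use Suc.prems in simp_all)
  finally show ?case by simp
qed

lemma full_twist_commute_first:
  assumes "2 \<le> m"
  shows "braid_commute (word_pow m (ascending_word 0 (m - 1))) [(0, True)]"
proof -
  let ?d = "ascending_word 0 (m - 1)"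
  obtain n where m: "m = Suc (Suc n)" using assms by (metis add_2_eq_Suc le_Suc_ex)
  have "braid_eq (?d @ ?d @ word_pow n ?d @ [(0, True)]) (?d @ ?d @ [(n, True)] @ word_pow n ?d)"
    by (rule braid_eq_in_context[OF ascending_word_pow_shift_first[of n m], of "?d @ ?d" "[]"])
      (simp_all add: m)
  also have "braid_eq \<dots> ([(0, True)] @ ?d @ ?d @ word_pow n ?d)"
  proof -
    have "braid_eq (?d @ ?d @ [(n, True)]) ([(0, True)] @ ?d @ ?d)"
      using ascending_word_square_shift_last[of 0 n] by (simp add: m)
    then show ?thesis
      by (rule braid_eq_in_context[of _ _ "[]" "word_pow n ?d"]) simp_all
  qed
  finally show ?thesis by (simp add: braid_commute_def m)
qed

definition half_twist3 :: braid_word where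
  "half_twist3 = [(0, True), (1, True), (0, True)]"

lemma half_twist3_square_commute_first: "braid_commute (word_pow 2 half_twist3) [(0, True)]"
proof -
  have "braid_eq (half_twist3 @ half_twist3 @ [(0, True)]) (half_twist3 @ [(1, True)] @ half_twist3)"
    by (rule braid_eq_in_context[OF be_braid[of 0], of half_twist3 "[(0, True)]"])
      (simp_all add: half_twist3_def)
  also have "braid_eq \<dots> ([(0, True)] @ half_twist3 @ half_twist3)"
    by (rule braid_eq_in_context[OF be_sym[OF be_braid[of 0]], of "[(0, True)]" half_twist3])
      (simp_all add: half_twist3_def)
  finally show ?thesis by (simp add: braid_commute_def numeral_2_eq_2)
qed

lemma braid_eq_conjugate_cancel:
  assumes "braid_eq (g @ x @ inverse_word g) (g @ y @ inverse_word g)"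
  shows "braid_eq x y"
proof -
  have cancel: "braid_eq (inverse_word g @ (g @ z @ inverse_word g) @ g) z" for z
    using braid_eq_append[OF braid_eq_inverse_word_append
        braid_eq_append[OF be_refl[of z] braid_eq_inverse_word_append]]
    by simp
  have "braid_eq x (inverse_word g @ (g @ x @ inverse_word g) @ g)"
    by (rule be_sym[OF cancel])
  also have "braid_eq \<dots> (inverse_word g @ (g @ y @ inverse_word g) @ g)"
    by (rule be_cong[OF assms])
  also have "braid_eq \<dots> y"
    by (rule cancel)
  finally show ?thesis .
qed

lemma sigma_square_conjugates_same_power:
  fixes D g :: braid_word
  defines "u \<equiv> [(0, True), (0, True)]"
  assumes "braid_commute (word_pow p D) [(0, True)]"
  shows "braid_eq (word_pow p (g @ (u @ D @ inverse_word u) @ inverse_word g))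
                  (word_pow p (g @ D @ inverse_word g))"
proof -
  have "braid_commute (word_pow p D) u"
    using braid_commute_append[OF assms(2) assms(2)] by (simp add: u_def)
  then have commute: "braid_eq (u @ word_pow p D) (word_pow p D @ u)"
    unfolding braid_commute_def by (rule be_sym)
  have "braid_eq (word_pow p (g @ (u @ D @ inverse_word u) @ inverse_word g))
                 (g @ word_pow p (u @ D @ inverse_word u) @ inverse_word g)"
    by (rule word_pow_conjugate)
  also have "braid_eq \<dots> (g @ (u @ word_pow p D @ inverse_word u) @ inverse_word g)"
    by (rule be_cong[OF word_pow_conjugate])
  also have "braid_eq \<dots> (g @ (word_pow p D @ u) @ inverse_word u @ inverse_word g)"
    by (rule braid_eq_in_context[OF commute, of g "inverse_word u @ inverse_word g"]) simp_all
  also have "braid_eq \<dots> (g @ word_pow p D @ [] @ inverse_word g)"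
    by (rule braid_eq_in_context[OF braid_eq_append_inverse_word, of "g @ word_pow p D"]) simp_all
  also have "braid_eq \<dots> (word_pow p (g @ D @ inverse_word g))"
    using be_sym[OF word_pow_conjugate] by simp
  finally show ?thesis .
qed

lemma sigma_square_conjugates_distinct:
  fixes D g :: braid_word
  defines "u \<equiv> [(0, True), (0, True)]"
  assumes "{perm_of D 0, perm_of D 1} \<noteq> {0, 1}"
  shows "\<not> braid_eq (g @ (u @ D @ inverse_word u) @ inverse_word g) (g @ D @ inverse_word g)"
proof
  assume "braid_eq (g @ (u @ D @ inverse_word u) @ inverse_word g) (g @ D @ inverse_word g)"
  then have "linking 0 1 (u @ D @ inverse_word u) = linking 0 1 D"
    by (rule linking_braid_eq[OF braid_eq_conjugate_cancel])
  then show False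
    using linking_sigma_square_conjugate[OF assms(2), folded u_def] by simp
qed

section \<open>Roots in bi-orderable monoids\<close>

lemma bi_orderable_pow_eq_imp_eq:
  fixes G (structure)
  assumes "monoid G" "bi_orderable G"
    and "x \<in> carrier G" "y \<in> carrier G" "x [^] n = y [^] n" "n \<noteq> (0::nat)"
  shows "x = y"
proof -
  interpret monoid G by fact
  obtain less where irrefl: "\<forall>a \<in> carrier G. \<not> less a a"
    and trans: "\<forall>a \<in> carrier G. \<forall>b \<in> carrier G. \<forall>c \<in> carrier G. less a b \<longrightarrow> less b c \<longrightarrow> less a c"
    and total: "\<forall>a \<in> carrier G. \<forall>b \<in> carrier G. a \<noteq> b \<longrightarrow> less a b \<or> less b a"
    and mult: "\<forall>a \<in> carrier G. \<forall>b \<in> carrier G. \<forall>c \<in> carrier G. less a b \<longrightarrow>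
                 less (c \<otimes> a) (c \<otimes> b) \<and> less (a \<otimes> c) (b \<otimes> c)"
    using assms(2) unfolding bi_orderable_def by blast
  have pow_mono: "less (a [^] Suc k) (b [^] Suc k)"
    if a: "a \<in> carrier G" and b: "b \<in> carrier G" and ab: "less a b" for a b k
  proof (induction k)
    case 0
    show ?case using a b ab by simp
  next
    case (Suc k)
    have "less (a [^] Suc k \<otimes> a) (b [^] Suc k \<otimes> a)"
      using mult a b Suc.IH by (meson nat_pow_closed)
    moreover have "less (b [^] Suc k \<otimes> a) (b [^] Suc k \<otimes> b)"
      using mult a b ab by (meson nat_pow_closed)
    ultimately have "less (a [^] Suc k \<otimes> a) (b [^] Suc k \<otimes> b)"
      using trans a b by (meson m_closed nat_pow_closed)
    then show ?case by (simp only: nat_pow_Suc)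
  qed
  obtain k where n: "n = Suc k" using assms(6) not0_implies_Suc by blast
  have "y [^] n \<in> carrier G" using assms(4) by simp
  then have "\<not> less (x [^] n) (y [^] n)" "\<not> less (y [^] n) (x [^] n)"
    using irrefl assms(5) by simp_all
  then have "\<not> less x y" "\<not> less y x"
    using pow_mono assms(3,4) n by blast+
  then show ?thesis
    using total assms(3,4) by blast
qed

lemma subgroup_nat_pow_closed:
  assumes "subgroup H G" "x \<in> H"
  shows "x [^]\<^bsub>G\<^esub> (n::nat) \<in> H"
  by (induction n) (simp_all add: subgroup.one_closed[OF assms(1)] subgroup.m_closed[OF assms(1)] assms(2))

section \<open>Permutations of prime order\<close>

lemma funpow_prime_order_power:
  fixes f :: "'a \<Rightarrow> 'a"
  assumes "f ^^ n = id" "0 < n" "f \<noteq> id"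
  shows "\<exists>k p. prime p \<and> (f ^^ k) ^^ p = id \<and> f ^^ k \<noteq> id"
  using assms
proof (induction n rule: less_induct)
  case (less n)
  then have "n \<noteq> 1" by auto
  then obtain p where p: "prime p" "p dvd n" using prime_factor_nat by blast
  then obtain m where n: "n = m * p" by (auto simp: mult.commute elim: dvdE)
  show ?case
  proof (cases "f ^^ m = id")
    case True
    have "0 < m" "m < n"
      using n less.prems(2) prime_gt_1_nat[OF p(1)] by simp_all
    then show ?thesis using less.IH True less.prems(3) by blast
  next
    case False
    then show ?thesis using p less.prems(1) n by (metis funpow_mult)
  qed
qed

locale prime_order_perm =
  fixes \<rho> :: "nat \<Rightarrow> nat" and p :: nat
  assumes permutation: "permutation \<rho>"
    and funpow_order: "\<rho> ^^ p = id"
    and prime_order: "prime p"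
begin

lemma order_ge_2: "2 \<le> p"
  using prime_order prime_ge_2_nat by blast

lemma funpow_mult_order: "\<rho> ^^ (p * q) = id"
  by (simp only: funpow_mult[symmetric] funpow_order id_funpow)

lemma funpow_mod: "(\<rho> ^^ n) x = (\<rho> ^^ (n mod p)) x"
proof -
  have "\<rho> ^^ n = \<rho> ^^ (n mod p) \<circ> \<rho> ^^ (p * (n div p))"
    by (simp add: funpow_add[symmetric])
  then show ?thesis by (simp add: funpow_mult_order)
qed

lemma funpow_inverse: "(\<rho> ^^ ((p - 1) * q)) ((\<rho> ^^ q) x) = x"
proof -
  have "(p - 1) * q + q = p * q"
    using order_ge_2 by (simp add: algebra_simps)
  then have "\<rho> ^^ ((p - 1) * q) \<circ> \<rho> ^^ q = id"
    by (simp add: funpow_add[symmetric] funpow_mult_order)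
  then show ?thesis by (simp add: fun_eq_iff)
qed

lemma funpow_fixed_iff: "\<rho> x \<noteq> x \<Longrightarrow> (\<rho> ^^ n) x = x \<longleftrightarrow> p dvd n"
proof -
  assume moved: "\<rho> x \<noteq> x"
  have "least_power \<rho> x dvd p"
    using least_power_dvd[OF permutation] funpow_order by simp
  moreover have "least_power \<rho> x \<noteq> 1"
    using least_power_gt_one[OF permutation moved] by simp
  ultimately have "least_power \<rho> x = p"
    using prime_order unfolding prime_nat_iff by blast
  then show ?thesis using least_power_dvd[OF permutation, of x n] by simp
qed

lemma funpow_moved:
  assumes "\<rho> x \<noteq> x" shows "\<rho> ((\<rho> ^^ k) x) \<noteq> (\<rho> ^^ k) x"
proof
  assume "\<rho> ((\<rho> ^^ k) x) = (\<rho> ^^ k) x"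
  then have "(\<rho> ^^ k) (\<rho> x) = (\<rho> ^^ k) x"
    by (simp add: funpow_swap1)
  moreover have "inj (\<rho> ^^ k)"
    using permutation_bijective[OF permutation] bij_is_inj inj_fn by blast
  ultimately show False
    using assms by (simp add: inj_eq)
qed

lemma funpow_inj_on_orbit:
  assumes "\<rho> x \<noteq> x" "q < p" "q' < p" "(\<rho> ^^ q) x = (\<rho> ^^ q') x"
  shows "q = q'"
proof -
  have inj: "inj \<rho>"
    using permutation_bijective[OF permutation] bij_is_inj by blast
  have "p dvd (max q q' - min q q')"
    using funpow_diff[OF inj, of "min q q'" "max q q'" x] assms(4) funpow_fixed_iff[OF assms(1)]
    by (cases "q \<le> q'") (simp_all add: max_def min_def)
  then show ?thesis
    using assms(2,3) by (cases "q \<le> q'") (auto dest: dvd_imp_le)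
qed

definition orbit_min :: "nat \<Rightarrow> bool" where
  "orbit_min x \<longleftrightarrow> \<rho> x \<noteq> x \<and> (\<forall>k. x \<le> (\<rho> ^^ k) x)"

lemma finite_orbit_min: "finite (Collect orbit_min)"
  using permutation_finite_support[OF permutation]
  by (rule rev_finite_subset) (auto simp: orbit_min_def)

lemma orbit_min_unique:
  assumes "orbit_min x" "orbit_min x'" "(\<rho> ^^ q) x = (\<rho> ^^ q') x'"
  shows "x = x'"
proof -
  have "x' = (\<rho> ^^ ((p - 1) * q' + q)) x"
    by (metis assms(3) funpow_inverse funpow_add comp_apply)
  moreover have "x = (\<rho> ^^ ((p - 1) * q + q')) x'"
    by (metis assms(3) funpow_inverse funpow_add comp_apply)
  ultimately show ?thesis
    using assms(1,2) unfolding orbit_min_def by (metis le_antisym)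
qed

lemma exists_orbit_min:
  assumes "\<rho> y \<noteq> y"
  shows "\<exists>x q. orbit_min x \<and> q < p \<and> y = (\<rho> ^^ q) x"
proof -
  define orb where "orb = (\<lambda>k. (\<rho> ^^ k) y) ` {..<p}"
  have "finite orb" "orb \<noteq> {}"
    using order_ge_2 by (auto simp: orb_def lessThan_empty_iff)
  then obtain k0 where k0: "k0 < p" "Min orb = (\<rho> ^^ k0) y"
    using Min_in unfolding orb_def by blast
  have "Min orb \<le> (\<rho> ^^ k) (Min orb)" for k
  proof -
    have "(\<rho> ^^ k) (Min orb) = (\<rho> ^^ ((k + k0) mod p)) y"
      using k0(2) funpow_mod[of "k + k0"] by (simp add: funpow_add)
    moreover have "(\<rho> ^^ ((k + k0) mod p)) y \<in> orb"
      using order_ge_2 by (auto simp: orb_def)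
    ultimately show ?thesis using \<open>finite orb\<close> by simp
  qed
  then have "orbit_min (Min orb)"
    using funpow_moved[OF assms] k0(2) by (simp add: orbit_min_def)
  moreover have "y = (\<rho> ^^ (((p - 1) * k0) mod p)) (Min orb)"
    using funpow_inverse[of k0 y] funpow_mod k0(2) by simp
  moreover have "((p - 1) * k0) mod p < p"
    using order_ge_2 by simp
  ultimately show ?thesis by blast
qed

text \<open>Listing the orbit minima as \<open>S\<close>, the \<open>i\<close>-th element below is \<open>\<rho>\<^sup>q(S\<^sub>s)\<close> for
  \<open>i = q |S| + s\<close>, so that \<open>\<rho>\<close> acts on indices as a shift by \<open>|S|\<close> modulo \<open>|S| p\<close>.\<close>

definition orbit_enum :: "nat list \<Rightarrow> nat \<Rightarrow> nat" where
  "orbit_enum S i = (\<rho> ^^ (i div length S)) (S ! (i mod length S))"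

context
  fixes S :: "nat list"
  assumes distinct_S: "distinct S" and set_S: "set S = Collect orbit_min"
begin

lemma orbit_enum_inj: "inj_on (orbit_enum S) {..<length S * p}"
proof (rule inj_onI)
  fix i j
  assume ij: "i \<in> {..<length S * p}" "j \<in> {..<length S * p}" "orbit_enum S i = orbit_enum S j"
  let ?r = "length S"
  have r: "0 < ?r" using ij(1) by (cases ?r) auto
  have mins: "orbit_min (S ! (i mod ?r))" "orbit_min (S ! (j mod ?r))"
    using set_S r by (metis mem_Collect_eq mod_less_divisor nth_mem)+
  then have "S ! (i mod ?r) = S ! (j mod ?r)"
    using ij(3) orbit_min_unique unfolding orbit_enum_def by blast
  then have s: "i mod ?r = j mod ?r"
    using distinct_S r by (simp add: nth_eq_iff_index_eq)
  have "i div ?r < p" "j div ?r < p"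
    using ij(1,2) by (simp_all add: less_mult_imp_div_less mult.commute)
  moreover have "(\<rho> ^^ (i div ?r)) (S ! (i mod ?r)) = (\<rho> ^^ (j div ?r)) (S ! (i mod ?r))"
    using ij(3) s by (simp add: orbit_enum_def)
  ultimately have "i div ?r = j div ?r"
    using funpow_inj_on_orbit[of "S ! (i mod ?r)" "i div ?r" "j div ?r"] mins(1)
    by (simp add: orbit_min_def)
  with s show "i = j" by (metis div_mult_mod_eq)
qed

lemma orbit_enum_cover: "{x. \<rho> x \<noteq> x} \<subseteq> orbit_enum S ` {..<length S * p}"
proof
  fix y
  assume "y \<in> {x. \<rho> x \<noteq> x}"
  then obtain x q where x: "orbit_min x" "q < p" "y = (\<rho> ^^ q) x"
    using exists_orbit_min by blast
  then obtain s where s: "s < length S" "S ! s = x"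
    using set_S by (metis in_set_conv_nth mem_Collect_eq)
  have "q * length S + s < length S * p"
  proof -
    have "q * length S + s < Suc q * length S" using s(1) by simp
    also have "\<dots> \<le> p * length S" using x(2) by (intro mult_le_mono1) simp
    finally show ?thesis by (simp add: mult.commute)
  qed
  moreover have "orbit_enum S (q * length S + s) = y"
  proof -
    have "length S \<noteq> 0" using s(1) by auto
    then have "(q * length S + s) div length S = q" "(q * length S + s) mod length S = s"
      using s(1) by (simp_all add: add.commute[of "q * length S"])
    then show ?thesis using s x(3) by (simp add: orbit_enum_def)
  qed
  ultimately show "y \<in> orbit_enum S ` {..<length S * p}" by blast
qed

lemma orbit_enum_shift:
  assumes "i < length S * p"
  shows "\<rho> (orbit_enum S i) = orbit_enum S ((i + length S) mod (length S * p))"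
proof -
  let ?r = "length S"
  have r: "0 < ?r" using assms by (cases ?r) auto
  have "(i + ?r) div ?r = i div ?r + 1" "(i + ?r) mod ?r = i mod ?r"
    using r by (simp_all add: div_add_self2)
  then have "(i + ?r) mod (?r * p) = ?r * ((i div ?r + 1) mod p) + i mod ?r"
    using mod_mult2_eq[of "i + ?r" ?r p] by simp
  then have "orbit_enum S ((i + ?r) mod (?r * p)) = (\<rho> ^^ ((i div ?r + 1) mod p)) (S ! (i mod ?r))"
    using r by (simp add: orbit_enum_def)
  also have "\<dots> = \<rho> (orbit_enum S i)"
    using funpow_mod[of "i div ?r + 1"] by (simp add: orbit_enum_def)
  finally show ?thesis by simp
qed

end

lemma orbit_enumeration:
  assumes "\<rho> \<noteq> id"
  obtains r e where "0 < r" "inj_on e {..<r * p}" "{x. \<rho> x \<noteq> x} \<subseteq> e ` {..<r * p}"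
    "\<And>i. i < r * p \<Longrightarrow> \<rho> (e i) = e ((i + r) mod (r * p))"
proof -
  obtain S where S: "distinct S" "set S = Collect orbit_min"
    using finite_distinct_list[OF finite_orbit_min] by blast
  obtain y where "\<rho> y \<noteq> y" using assms by (auto simp: fun_eq_iff)
  then have "length S \<noteq> 0"
    using orbit_enum_cover[OF S] by auto
  then show ?thesis
    using that[OF _ orbit_enum_inj[OF S] orbit_enum_cover[OF S] orbit_enum_shift[OF S]] by simp
qed

end

section \<open>Braids with a prescribed permutation\<close>

definition descending_word :: "nat \<Rightarrow> nat \<Rightarrow> braid_word" where
  "descending_word a b = map (\<lambda>k. (k, True)) (rev [a..<b])"

lemma perm_of_descending_word:
  assumes "a \<le> b"
  shows "perm_of (descending_word a b) a = b \<and> (\<forall>i<a. perm_of (descending_word a b) i = i)"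
  using assms
proof (induction b rule: dec_induct)
  case base
  then show ?case by (simp add: descending_word_def)
next
  case (step b)
  then have "descending_word a (Suc b) = (b, True) # descending_word a b"
    by (simp add: descending_word_def)
  then show ?case using step by (auto simp: perm_gen_def)
qed

lemma exists_perm_of_prefix:
  assumes "distinct t"
  shows "\<exists>g. \<forall>i<length t. perm_of g i = t ! i"
  using assms
proof (induction t rule: rev_induct)
  case Nil
  show ?case by simp
next
  case (snoc z t)
  then obtain g where g: "\<forall>i<length t. perm_of g i = t ! i" by auto
  define y where "y = perm_of (inverse_word g) z"
  have gy: "perm_of g y = z"
    by (simp add: y_def perm_of_inverse_word)
  have "length t \<le> y"
  proof (rule ccontr)
    assume "\<not> length t \<le> y"
    then have "z \<in> set t" using g gy by (metis not_le nth_mem)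
    then show False using snoc.prems by simp
  qed
  then have "perm_of (g @ descending_word (length t) y) i = (t @ [z]) ! i"
    if "i < length (t @ [z])" for i
    using that g gy perm_of_descending_word[of "length t" y]
    by (cases "i < length t") (auto simp: nth_append less_Suc_eq)
  then show ?case by blast
qed

lemma perm_of_conjugate_relabel:
  assumes "distinct t" "{x. \<rho> x \<noteq> x} \<subseteq> set t"
    and "\<And>i. i < length t \<Longrightarrow> perm_of D i < length t \<and> \<rho> (t ! i) = t ! perm_of D i"
    and "\<And>i. length t \<le> i \<Longrightarrow> perm_of D i = i"
  shows "\<exists>g. perm_of (g @ D @ inverse_word g) = \<rho>"
proof -
  obtain g where g: "\<forall>i<length t. perm_of g i = t ! i"
    using exists_perm_of_prefix[OF assms(1)] by blast
  have "perm_of (g @ D @ inverse_word g) x = \<rho> x" for x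
  proof -
    obtain y where x: "x = perm_of g y"
      using perm_of_inverse_word(2) by metis
    then have y: "perm_of (inverse_word g) x = y"
      by (simp add: perm_of_inverse_word)
    show ?thesis
    proof (cases "y < length t")
      case True
      then have "x = t ! y" using x g by simp
      then show ?thesis
        using assms(3)[OF True] g y by simp
    next
      case False
      have "\<rho> x = x"
      proof (rule ccontr)
        assume "\<rho> x \<noteq> x"
        then obtain j where j: "j < length t" "t ! j = x"
          using assms(2) in_set_conv_nth[of x t] by blast
        then have "perm_of (inverse_word g) (perm_of g j) = perm_of (inverse_word g) (perm_of g y)"
          using g x by simp
        then show False using j False by (simp add: perm_of_inverse_word)
      qed
      then show ?thesis
        using assms(4) False x y by simp
    qed
  qed
  then show ?thesis by blast
qed

lemma perm_of_ascending_word_from_0: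
  "perm_of (ascending_word 0 n) i = (if i < n then Suc i else if i = n then 0 else i)"
proof (induction n arbitrary: i)
  case 0
  then show ?case by (simp add: ascending_word_def)
next
  case (Suc n)
  then show ?case by (auto simp: ascending_word_Suc perm_gen_def)
qed

lemma perm_of_ascending_word_pow:
  "perm_of (word_pow k (ascending_word 0 (m - 1))) i = (if i < m then (i + k) mod m else i)"
proof -
  have "perm_of (ascending_word 0 (m - 1)) i = (if i < m then Suc i mod m else i)" for i
  proof (cases "i = m - 1 \<and> 0 < m")
    case True
    then have "Suc i = m" by simp
    then show ?thesis using True by (simp add: perm_of_ascending_word_from_0)
  qed (auto simp: perm_of_ascending_word_from_0)
  then have "(perm_of (ascending_word 0 (m - 1)) ^^ k) i = (if i < m then (i + k) mod m else i)"
    by (induction k) (auto simp: mod_Suc_eq)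
  then show ?thesis by (simp add: perm_of_word_pow)
qed

lemma perm_of_half_twist3: "perm_of half_twist3 = transpose 0 2"
  by (auto simp: half_twist3_def perm_gen_def transpose_def fun_eq_iff)

lemma cyclic_braid_model:
  fixes \<rho> e :: "nat \<Rightarrow> nat"
  assumes "3 \<le> r * p" "2 \<le> p" "inj_on e {..<r * p}" "{x. \<rho> x \<noteq> x} \<subseteq> e ` {..<r * p}"
    and "\<And>i. i < r * p \<Longrightarrow> \<rho> (e i) = e ((i + r) mod (r * p))"
  obtains D g where "perm_of (g @ D @ inverse_word g) = \<rho>"
    "braid_commute (word_pow p D) [(0, True)]" "{perm_of D 0, perm_of D 1} \<noteq> {0, 1}"
proof -
  define m where "m = r * p"
  define D where "D = word_pow r (ascending_word 0 (m - 1))"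
  have m3: "3 \<le> m" using assms(1) by (simp add: m_def)
  have perm_D: "perm_of D i = (if i < m then (i + r) mod m else i)" for i
    unfolding D_def by (rule perm_of_ascending_word_pow)
  have "\<exists>g. perm_of (g @ D @ inverse_word g) = \<rho>"
  proof (rule perm_of_conjugate_relabel[of "map e [0..<m]"])
    show "distinct (map e [0..<m])"
      using assms(3) by (simp add: distinct_map m_def atLeast0LessThan)
    show "{x. \<rho> x \<noteq> x} \<subseteq> set (map e [0..<m])"
      using assms(4) by (simp add: m_def atLeast0LessThan)
    show "perm_of D i < length (map e [0..<m]) \<and> \<rho> (map e [0..<m] ! i) = map e [0..<m] ! perm_of D i"
      if "i < length (map e [0..<m])" for i
    proof -
      have "(i + r) mod m < m" using m3 by simp
      then show ?thesis using that assms(5) by (simp add: perm_D m_def)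
    qed
    show "perm_of D i = i" if "length (map e [0..<m]) \<le> i" for i
      using that by (simp add: perm_D)
  qed
  then obtain g where "perm_of (g @ D @ inverse_word g) = \<rho>"
    by blast
  moreover have "braid_commute (word_pow p D) [(0, True)]"
    using full_twist_commute_first[of m] assms(1)
    by (simp add: D_def word_pow_mult m_def)
  moreover have "{perm_of D 0, perm_of D 1} \<noteq> {0, 1}"
  proof
    assume D01: "{perm_of D 0, perm_of D 1} = {0, 1}"
    have r: "0 < r"
      using m3 by (cases r) (simp_all add: m_def)
    then have "r < m"
      using assms(2) by (simp add: m_def)
    then have "perm_of D 0 = r" "perm_of D 1 = (r + 1) mod m"
      using m3 by (simp_all add: perm_D)
    then have "r = 1" "(r + 1) mod m = 0"
      using D01 r by (auto simp: doubleton_eq_iff)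
    then show False
      using m3 mod_less[of 2 m] by simp
  qed
  ultimately show thesis by (rule that)
qed

lemma transposition_braid_model:
  assumes "a \<noteq> b"
  obtains g where "perm_of (g @ half_twist3 @ inverse_word g) = transpose a b"
proof -
  obtain c where c: "c \<notin> {a, b}"
    using ex_new_if_finite[OF infinite_UNIV_nat, of "{a, b}"] by blast
  have "\<exists>g. perm_of (g @ half_twist3 @ inverse_word g) = transpose a b"
  proof (rule perm_of_conjugate_relabel[of "[a, c, b]"])
    show "distinct [a, c, b]" using assms c by auto
    show "{x. transpose a b x \<noteq> x} \<subseteq> set [a, c, b]"
      by (auto simp: transpose_def)
    show "perm_of half_twist3 i < length [a, c, b] \<and>
        transpose a b ([a, c, b] ! i) = [a, c, b] ! perm_of half_twist3 i"
      if "i < length [a, c, b]" for i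
      using that c by (auto simp: perm_of_half_twist3 transpose_def less_Suc_eq)
    show "perm_of half_twist3 i = i" if "length [a, c, b] \<le> i" for i
      using that by (simp add: perm_of_half_twist3 transpose_def)
  qed
  then show thesis using that by blast
qed

lemma (in prime_order_perm) braid_model:
  assumes "\<rho> \<noteq> id"
  obtains D g where "perm_of (g @ D @ inverse_word g) = \<rho>"
    "braid_commute (word_pow p D) [(0, True)]" "{perm_of D 0, perm_of D 1} \<noteq> {0, 1}"
proof -
  obtain r e where r: "0 < r" and e: "inj_on e {..<r * p}" "{x. \<rho> x \<noteq> x} \<subseteq> e ` {..<r * p}"
    "\<And>i. i < r * p \<Longrightarrow> \<rho> (e i) = e ((i + r) mod (r * p))"
    using orbit_enumeration[OF assms] by blast
  show thesis
  proof (cases "3 \<le> r * p")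
    case True
    show thesis by (rule cyclic_braid_model[OF True order_ge_2 e that])
  next
    case False
    \<comment> \<open>Then \<open>\<rho>\<close> is a transposition, whose cyclic model \<open>\<sigma>\<^sub>1\<close> would preserve the first two
      strands; the half twist \<open>\<sigma>\<^sub>1\<sigma>\<^sub>2\<sigma>\<^sub>1\<close> on three strands is used instead.\<close>
    have "2 * r \<le> r * p"
      using mult_le_mono1[OF order_ge_2, of r] by (simp add: mult.commute)
    then have r1: "r = 1"
      using False r by linarith
    then have p2: "p = 2"
      using False order_ge_2 by simp
    have e01: "\<rho> (e 0) = e 1" "\<rho> (e 1) = e 0"
      using e(3)[of 0] e(3)[of 1] by (simp_all add: r1 p2)
    have "e 0 \<noteq> e 1"
      using inj_onD[OF e(1), of 0 1] by (auto simp: r1 p2)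
    have "\<rho> x = x" if "x \<noteq> e 0" "x \<noteq> e 1" for x
      using e(2) that by (auto simp: r1 p2 lessThan_Suc numeral_2_eq_2)
    then have "\<rho> = transpose (e 0) (e 1)"
      using e01 by (auto simp: fun_eq_iff transpose_def)
    then obtain g where "perm_of (g @ half_twist3 @ inverse_word g) = \<rho>"
      using transposition_braid_model[OF \<open>e 0 \<noteq> e 1\<close>] by blast
    moreover have "braid_commute (word_pow p half_twist3) [(0, True)]"
      using half_twist3_square_commute_first by (simp add: p2)
    moreover have "{perm_of half_twist3 0, perm_of half_twist3 1} \<noteq> {0, 1}"
      by (simp add: perm_of_half_twist3 transpose_def doubleton_eq_iff)
    ultimately show thesis by (rule that)
  qed
qed

lemma subgroup_above_pure_braids_prime_order:
  assumes "subgroup H braid_group" "pure_braids \<subset> H"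
  obtains w p where "braid_class w \<in> H" "prime p" "perm_of w ^^ p = id" "perm_of w \<noteq> id"
proof -
  obtain c where c: "c \<in> H" "c \<notin> pure_braids"
    using assms(2) by blast
  then obtain w where w: "c = braid_class w"
    using subgroup.subset[OF assms(1)] braid_group_carrier by blast
  obtain n where "perm_of w ^^ n = id" "0 < n"
    using permutation_is_nilpotent[OF permutation_perm_of] by blast
  moreover have "perm_of w \<noteq> id"
    using c w braid_class_in_pure_braids_iff by blast
  ultimately obtain k p where "prime p" "(perm_of w ^^ k) ^^ p = id" "perm_of w ^^ k \<noteq> id"
    using funpow_prime_order_power by blast
  moreover have "braid_class (word_pow k w) \<in> H"
    using subgroup_nat_pow_closed[OF assms(1) c(1)] by (simp add: w braid_group_pow)
  ultimately show thesis
    using that[of "word_pow k w" p] by (simp add: perm_of_word_pow)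
qed

lemma subgroup_above_pure_braids_has_distinct_roots:
  assumes "subgroup H braid_group" "pure_braids \<subset> H"
  obtains x y and n :: nat where "x \<in> H" "y \<in> H" "x \<noteq> y"
    "x [^]\<^bsub>braid_group\<^esub> n = y [^]\<^bsub>braid_group\<^esub> n" "n \<noteq> 0"
proof -
  obtain w p where w: "braid_class w \<in> H" "prime p" "perm_of w ^^ p = id" "perm_of w \<noteq> id"
    by (rule subgroup_above_pure_braids_prime_order[OF assms])
  interpret prime_order_perm "perm_of w" p
    using w by unfold_locales (simp_all add: permutation_perm_of)
  obtain D g where D: "perm_of (g @ D @ inverse_word g) = perm_of w"
    "braid_commute (word_pow p D) [(0, True)]" "{perm_of D 0, perm_of D 1} \<noteq> {0, 1}"
    by (rule braid_model[OF w(4)])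
  define u where "u = [(0::nat, True), (0::nat, True)]"
  define X X' where "X = g @ D @ inverse_word g"
    and "X' = g @ (u @ D @ inverse_word u) @ inverse_word g"
  have "perm_of u = id" "perm_of (inverse_word u) = id"
    by (simp_all add: u_def fun_eq_iff perm_gen_def)
  then have "perm_of X' = perm_of w" "perm_of X = perm_of w"
    using D(1) by (simp_all add: X_def X'_def)
  then have "braid_class X \<in> H" "braid_class X' \<in> H"
    using same_perm_in_subgroup[OF assms(1) psubset_imp_subset[OF assms(2)] w(1)] by simp_all
  moreover have "braid_class X' \<noteq> braid_class X"
    using sigma_square_conjugates_distinct[OF D(3)]
    by (simp add: braid_class_eq_iff X_def X'_def u_def)
  moreover have "braid_class X' [^]\<^bsub>braid_group\<^esub> p = braid_class X [^]\<^bsub>braid_group\<^esub> p"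
    using sigma_square_conjugates_same_power[OF D(2)]
    by (simp add: braid_group_pow braid_class_eq_iff X_def X'_def u_def)
  moreover have "p \<noteq> 0"
    using order_ge_2 by simp
  ultimately show thesis
    by (metis that)
qed

theorem mainTheorem13:
  assumes "subgroup H braid_group"
    and "pure_braids \<subset> H"
  shows "\<not> bi_orderable (braid_group\<lparr>carrier := H\<rparr>)"
proof
  assume ordered: "bi_orderable (braid_group\<lparr>carrier := H\<rparr>)"
  obtain x y and n :: nat where xy: "x \<in> H" "y \<in> H" "x \<noteq> y"
    and pow: "x [^]\<^bsub>braid_group\<^esub> n = y [^]\<^bsub>braid_group\<^esub> n" and "n \<noteq> 0"
    by (rule subgroup_above_pure_braids_has_distinct_roots[OF assms])
  have "monoid (braid_group\<lparr>carrier := H\<rparr>)"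
    using subgroup.subgroup_is_group[OF assms(1) group_braid_group] by (rule group.is_monoid)
  moreover have "x [^]\<^bsub>braid_group\<lparr>carrier := H\<rparr>\<^esub> n = y [^]\<^bsub>braid_group\<lparr>carrier := H\<rparr>\<^esub> n"
    using pow by (simp add: nat_pow_def)
  ultimately have "x = y"
    using bi_orderable_pow_eq_imp_eq[OF _ ordered] xy \<open>n \<noteq> 0\<close> by simp
  with xy(3) show False ..
qed

end
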